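(* Let $S$ be any scheduling rule. If there are p-SLD derivations $G\xrightarrow{S,E}F$ and $F\xrightarrow{S,H}Q$ via $S$, then there is a p-SLD derivation $G\xrightarrow{E}F\xrightarrow{H}R$ via $S$ (whose first part is the given derivation from $G$ to $F$) such that $R$ is a p-variant of $Q$.
   Context: A p-atom is a pair $a[p]$ of an atom $a$ and a rational priority $p$. A p-goal is a finite set of p-atoms with pairwise distinct priorities, regarded as a list ordered by increasing priority. Substitutions act on atoms and leave priorities unchanged. A clause is $h\leftarrow B$ with $h$ an atom and $B$ a p-goal. For p-goals with no common priority, $F+G=F\cup G$; $F|G$ denotes $F+G$ when all priorities of $F$ are smaller than those of $G$. A shifting is a strictly increasing bijection $\mathbb{Q}\to\mathbb{Q}$ acting on priorities. $F$ is a p-variant of $G$ if $F=G\lambda\underline{\sigma}$ for a renaming $\lambda$ and a shifting $\underline{\sigma}$. Priority derivation step: for a p-goal $a|F$ ($a$ of least priority), clause $c=(h\leftarrow B)$, renaming $\xi$ with $var(a|F)\cap var(c\xi)=\emptyset$, idempotent relevant mgu $\theta$ of $a$ and $h\xi$, shifting $\underline{\pi}$ with $F$, $B\xi\underline{\pi}$ sharing no priority: $a|F\xrightarrow{c\xi,\theta}(F+B\xi\underline{\pi})\theta$. A p-SLD derivation is a sequence of such steps with each renamed clause $c_j\xi_j$ variable-disjoint from the initial goal and all earlier renamed clauses; its template is the sequence of applied clauses. Lowering: for $c=(h\leftarrow B)$, a step $a\lambda\underline{\sigma}|(K\lambda\underline{\sigma}+X)\xrightarrow{c}(X+K\lambda\underline{\sigma}+B\xi''\underline{\theta}'')\alpha''$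 is a lowering by $X$ of $a|K\xrightarrow{c}(K+B\xi'\underline{\theta}')\alpha'$; a congruent lowering if some shifting $\underline{\rho}$ has $K\underline{\rho}=K\underline{\sigma}$ and $B\underline{\theta}'\underline{\rho}=B\underline{\theta}''$. Steps are (congruent) lowerings of each other if each is a (congruent) lowering of the other. A set $S$ of steps is deterministic if any two steps of $S$ that are lowerings of each other are congruent lowerings of each other; complete if (i) whenever some step $G\xrightarrow{c}\cdot$ exists, some step $G\xrightarrow{c}\cdot$ lies in $S$, and (ii) $S$ contains every step that is a congruent lowering of each other with a step of $S$. A scheduling rule is a complete deterministic set of steps; a derivation is via $S$ if all its steps lie in $S$, and $G\xrightarrow{S,M}R$ denotes such a derivation with template $M$. *)

theory Defs
  imports Complex_Main
begin

datatype ('f, 'v) fterm = Var 'v | Fn 'f "('f, 'v) fterm list"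

datatype ('f, 'v) atom = Atom 'f "('f, 'v) fterm list"

type_synonym ('f, 'v) subst = "'v \<Rightarrow> ('f, 'v) fterm"

fun tsubst :: "('f, 'v) fterm \<Rightarrow> ('f, 'v) subst \<Rightarrow> ('f, 'v) fterm" where
  "tsubst (Var x) \<theta> = \<theta> x"
| "tsubst (Fn f ts) \<theta> = Fn f (map (\<lambda>t. tsubst t \<theta>) ts)"

fun tvars :: "('f, 'v) fterm \<Rightarrow> 'v set" where
  "tvars (Var x) = {x}"
| "tvars (Fn f ts) = (\<Union>t\<in>set ts. tvars t)"

fun asubst :: "('f, 'v) atom \<Rightarrow> ('f, 'v) subst \<Rightarrow> ('f, 'v) atom" where
  "asubst (Atom p ts) \<theta> = Atom p (map (\<lambda>t. tsubst t \<theta>) ts)"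

fun avars :: "('f, 'v) atom \<Rightarrow> 'v set" where
  "avars (Atom p ts) = (\<Union>t\<in>set ts. tvars t)"

definition scomp :: "('f, 'v) subst \<Rightarrow> ('f, 'v) subst \<Rightarrow> ('f, 'v) subst" where
  "scomp \<theta> \<delta> = (\<lambda>x. tsubst (\<theta> x) \<delta>)"

definition sdom :: "('f, 'v) subst \<Rightarrow> 'v set" where
  "sdom \<theta> = {x. \<theta> x \<noteq> Var x}"

definition svars :: "('f, 'v) subst \<Rightarrow> 'v set" where
  "svars \<theta> = sdom \<theta> \<union> (\<Union>x\<in>sdom \<theta>. tvars (\<theta> x))"

definition unifier :: "('f, 'v) subst \<Rightarrow> ('f, 'v) atom \<Rightarrow> ('f, 'v) atom \<Rightarrow> bool" where
  "unifier \<theta> a b \<longleftrightarrow> asubst a \<theta> = asubst b \<theta>"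

definition is_mgu :: "('f, 'v) subst \<Rightarrow> ('f, 'v) atom \<Rightarrow> ('f, 'v) atom \<Rightarrow> bool" where
  "is_mgu \<theta> a b \<longleftrightarrow> unifier \<theta> a b \<and>
     (\<forall>\<delta>. unifier \<delta> a b \<longrightarrow> (\<exists>\<gamma>. \<delta> = scomp \<theta> \<gamma>))"

definition idem_relevant_mgu :: "('f, 'v) subst \<Rightarrow> ('f, 'v) atom \<Rightarrow> ('f, 'v) atom \<Rightarrow> bool" where
  "idem_relevant_mgu \<theta> a b \<longleftrightarrow> is_mgu \<theta> a b \<and> scomp \<theta> \<theta> = \<theta> \<and>
     svars \<theta> \<subseteq> avars a \<union> avars b"

definition ren :: "('v \<Rightarrow> 'v) \<Rightarrow> ('f, 'v) subst" where
  "ren \<xi> = (\<lambda>x. Var (\<xi> x))"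

type_synonym ('f, 'v) pgoal = "(('f, 'v) atom \<times> rat) set"

definition is_pgoal :: "('f, 'v) pgoal \<Rightarrow> bool" where
  "is_pgoal G \<longleftrightarrow> finite G \<and> inj_on snd G"

definition prios :: "('f, 'v) pgoal \<Rightarrow> rat set" where
  "prios G = snd ` G"

definition gvars :: "('f, 'v) pgoal \<Rightarrow> 'v set" where
  "gvars G = (\<Union>(a, p)\<in>G. avars a)"

definition gsubst :: "('f, 'v) pgoal \<Rightarrow> ('f, 'v) subst \<Rightarrow> ('f, 'v) pgoal" where
  "gsubst G \<theta> = (\<lambda>(a, p). (asubst a \<theta>, p)) ` G"

definition shifting :: "(rat \<Rightarrow> rat) \<Rightarrow> bool" where
  "shifting \<sigma> \<longleftrightarrow> strict_mono \<sigma> \<and> bij \<sigma>"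

definition gshift :: "('f, 'v) pgoal \<Rightarrow> (rat \<Rightarrow> rat) \<Rightarrow> ('f, 'v) pgoal" where
  "gshift G \<sigma> = (\<lambda>(a, p). (a, \<sigma> p)) ` G"

definition p_variant :: "('f, 'v) pgoal \<Rightarrow> ('f, 'v) pgoal \<Rightarrow> bool" where
  "p_variant G H \<longleftrightarrow> (\<exists>l \<sigma>. bij l \<and> shifting \<sigma> \<and> G = gshift (gsubst H (ren l)) \<sigma>)"

definition split_least :: "('f, 'v) pgoal \<Rightarrow> ('f, 'v) atom \<Rightarrow> rat \<Rightarrow> ('f, 'v) pgoal \<Rightarrow> bool" where
  "split_least G a p F \<longleftrightarrow> G = insert (a, p) F \<and> (\<forall>q\<in>prios F. p < q)"

datatype ('f, 'v) clause = Clause (chead: "('f, 'v) atom") (cbody: "('f, 'v) pgoal")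

definition crename :: "('f, 'v) clause \<Rightarrow> ('v \<Rightarrow> 'v) \<Rightarrow> ('f, 'v) clause" where
  "crename c \<xi> = Clause (asubst (chead c) (ren \<xi>)) (gsubst (cbody c) (ren \<xi>))"

definition cvars :: "('f, 'v) clause \<Rightarrow> 'v set" where
  "cvars c = avars (chead c) \<union> gvars (cbody c)"

datatype ('f, 'v) step = Step
  (ssrc: "('f, 'v) pgoal") (scl: "('f, 'v) clause") (sren: "'v \<Rightarrow> 'v")
  (smgu: "('f, 'v) subst") (sshift: "rat \<Rightarrow> rat") (stgt: "('f, 'v) pgoal")

definition valid_step :: "('f, 'v) step \<Rightarrow> bool" where
  "valid_step s \<longleftrightarrow> is_pgoal (ssrc s) \<and> is_pgoal (cbody (scl s)) \<and>
     bij (sren s) \<and> shifting (sshift s) \<and>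
     gvars (ssrc s) \<inter> cvars (crename (scl s) (sren s)) = {} \<and>
     (\<exists>a p F. split_least (ssrc s) a p F \<and>
        idem_relevant_mgu (smgu s) a (chead (crename (scl s) (sren s))) \<and>
        prios F \<inter> prios (gshift (cbody (crename (scl s) (sren s))) (sshift s)) = {} \<and>
        stgt s = gsubst (F \<union> gshift (cbody (crename (scl s) (sren s))) (sshift s)) (smgu s))"

definition lowering_with ::
  "('f, 'v) step \<Rightarrow> ('f, 'v) step \<Rightarrow> ('f, 'v) pgoal \<Rightarrow> ('v \<Rightarrow> 'v) \<Rightarrow> (rat \<Rightarrow> rat)
     \<Rightarrow> ('f, 'v) atom \<Rightarrow> rat \<Rightarrow> ('f, 'v) pgoal \<Rightarrow> bool" where
  "lowering_with s2 s1 X l \<sigma> a p K \<longleftrightarrow>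
     valid_step s1 \<and> valid_step s2 \<and> scl s2 = scl s1 \<and> bij l \<and> shifting \<sigma> \<and>
     is_pgoal X \<and> split_least (ssrc s1) a p K \<and>
     prios X \<inter> prios (gshift (gsubst K (ren l)) \<sigma>) = {} \<and>
     split_least (ssrc s2) (asubst a (ren l)) (\<sigma> p) (gshift (gsubst K (ren l)) \<sigma> \<union> X)"

definition is_lowering :: "('f, 'v) step \<Rightarrow> ('f, 'v) step \<Rightarrow> bool" where
  "is_lowering s2 s1 \<longleftrightarrow> (\<exists>X l \<sigma> a p K. lowering_with s2 s1 X l \<sigma> a p K)"

definition is_congruent_lowering :: "('f, 'v) step \<Rightarrow> ('f, 'v) step \<Rightarrow> bool" where
  "is_congruent_lowering s2 s1 \<longleftrightarrow> (\<exists>X l \<sigma> a p K \<rho>. lowering_with s2 s1 X l \<sigma> a p K \<and>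
     shifting \<rho> \<and> gshift K \<rho> = gshift K \<sigma> \<and>
     gshift (gshift (cbody (scl s1)) (sshift s1)) \<rho> = gshift (cbody (scl s1)) (sshift s2))"

definition mutual_lowerings :: "('f, 'v) step \<Rightarrow> ('f, 'v) step \<Rightarrow> bool" where
  "mutual_lowerings s t \<longleftrightarrow> is_lowering s t \<and> is_lowering t s"

definition mutual_congruent_lowerings :: "('f, 'v) step \<Rightarrow> ('f, 'v) step \<Rightarrow> bool" where
  "mutual_congruent_lowerings s t \<longleftrightarrow> is_congruent_lowering s t \<and> is_congruent_lowering t s"

definition deterministic :: "('f, 'v) step set \<Rightarrow> bool" where
  "deterministic S \<longleftrightarrow> (\<forall>s\<in>S. \<forall>t\<in>S. mutual_lowerings s t \<longrightarrow> mutual_congruent_lowerings s t)"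

definition complete :: "('f, 'v) step set \<Rightarrow> bool" where
  "complete S \<longleftrightarrow>
     (\<forall>G c. (\<exists>s. valid_step s \<and> ssrc s = G \<and> scl s = c) \<longrightarrow> (\<exists>s\<in>S. ssrc s = G \<and> scl s = c)) \<and>
     (\<forall>s\<in>S. \<forall>t. valid_step t \<and> mutual_congruent_lowerings t s \<longrightarrow> t \<in> S)"

definition scheduling_rule :: "('f, 'v) step set \<Rightarrow> bool" where
  "scheduling_rule S \<longleftrightarrow> (\<forall>s\<in>S. valid_step s) \<and> complete S \<and> deterministic S"

fun chain :: "('f, 'v) pgoal \<Rightarrow> ('f, 'v) step list \<Rightarrow> ('f, 'v) pgoal \<Rightarrow> bool" where
  "chain G [] R \<longleftrightarrow> R = G"
| "chain G (s # ds) R \<longleftrightarrow> ssrc s = G \<and> valid_step s \<and> chain (stgt s) ds R"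

definition rclause :: "('f, 'v) step \<Rightarrow> ('f, 'v) clause" where
  "rclause s = crename (scl s) (sren s)"

definition pSLD :: "('f, 'v) pgoal \<Rightarrow> ('f, 'v) step list \<Rightarrow> ('f, 'v) pgoal \<Rightarrow> bool" where
  "pSLD G ds R \<longleftrightarrow> chain G ds R \<and>
     (\<forall>j<length ds. cvars (rclause (ds ! j)) \<inter> gvars G = {} \<and>
        (\<forall>i<j. cvars (rclause (ds ! j)) \<inter> cvars (rclause (ds ! i)) = {}))"

definition template :: "('f, 'v) step list \<Rightarrow> ('f, 'v) clause list" where
  "template ds = map scl ds"

definition deriv_via :: "('f, 'v) step set \<Rightarrow> ('f, 'v) pgoal \<Rightarrow> ('f, 'v) step list
    \<Rightarrow> ('f, 'v) clause list \<Rightarrow> ('f, 'v) pgoal \<Rightarrow> bool" where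
  "deriv_via S G ds M R \<longleftrightarrow> pSLD G ds R \<and> set ds \<subseteq> S \<and> template ds = M"

end

theory Submission
  imports Defs
begin

(*
  A scheduling rule is closed under mutual congruent lowerings, and renaming a whole step by a
  variable permutation l (source, target, clause renaming and, by conjugation, the mgu) is a
  congruent lowering by the empty goal with identity shifting, undone by renaming with inv l.
  So S is closed under renaming steps.  As there are infinitely many variables, the continuation
  from F can be renamed by a permutation fixing the variables of F and moving its clause
  variables away from G and from the clauses of the first derivation: the result is again a
  derivation via S with template H, it is standardized apart from the first derivation, and it
  ends in a renaming of Q.
*)

lemma tsubst_Var [simp]: "tsubst t Var = t"
  by (induction t) (auto intro: map_idI)

lemma asubst_Var [simp]: "asubst a Var = a"
  by (cases a) (auto intro: map_idI)

lemma gsubst_Var [simp]: "gsubst G Var = G"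
  unfolding gsubst_def by (simp add: case_prod_beta)

lemma tsubst_scomp: "tsubst (tsubst t \<sigma>) \<tau> = tsubst t (scomp \<sigma> \<tau>)"
  by (induction t) (auto simp: scomp_def)

lemma asubst_scomp: "asubst (asubst a \<sigma>) \<tau> = asubst a (scomp \<sigma> \<tau>)"
  by (cases a) (simp add: tsubst_scomp)

lemma gsubst_scomp: "gsubst (gsubst G \<sigma>) \<tau> = gsubst G (scomp \<sigma> \<tau>)"
  unfolding gsubst_def by (simp add: image_image case_prod_beta asubst_scomp)

lemma scomp_assoc: "scomp (scomp \<sigma> \<tau>) \<upsilon> = scomp \<sigma> (scomp \<tau> \<upsilon>)"
  by (simp add: scomp_def fun_eq_iff tsubst_scomp)

lemma scomp_ren_ren: "scomp (ren f) (ren g) = ren (g \<circ> f)"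
  by (simp add: scomp_def ren_def fun_eq_iff)

lemma scomp_Var_left [simp]: "scomp Var \<sigma> = \<sigma>"
  by (simp add: scomp_def)

lemma scomp_Var_right [simp]: "scomp \<sigma> Var = \<sigma>"
  by (simp add: scomp_def)

lemma ren_id [simp]: "ren id = Var"
  by (simp add: ren_def fun_eq_iff)

lemma scomp_ren_ren_inv [simp]: "bij l \<Longrightarrow> scomp (ren l) (ren (inv l)) = Var"
  by (simp add: scomp_ren_ren bij_is_inj)

lemma scomp_ren_inv_ren [simp]: "bij l \<Longrightarrow> scomp (ren (inv l)) (ren l) = Var"
  by (simp add: scomp_ren_ren surj_iff[THEN iffD1, OF bij_is_surj])

lemma scomp_ren_ren_inv_left [simp]: "bij l \<Longrightarrow> scomp (ren l) (scomp (ren (inv l)) \<sigma>) = \<sigma>"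
  by (simp add: scomp_assoc[symmetric])

lemma scomp_ren_inv_ren_left [simp]: "bij l \<Longrightarrow> scomp (ren (inv l)) (scomp (ren l) \<sigma>) = \<sigma>"
  by (simp add: scomp_assoc[symmetric])

lemma gsubst_ren_inv [simp]: "bij l \<Longrightarrow> gsubst (gsubst G (ren l)) (ren (inv l)) = G"
  by (simp add: gsubst_scomp)

lemma tsubst_ren_inj: "bij l \<Longrightarrow> tsubst s (ren l) = tsubst t (ren l) \<Longrightarrow> s = t"
  by (metis scomp_ren_ren_inv tsubst_Var tsubst_scomp)

lemma tsubst_cong: "(\<And>x. x \<in> tvars t \<Longrightarrow> \<sigma> x = \<tau> x) \<Longrightarrow> tsubst t \<sigma> = tsubst t \<tau>"
  by (induction t) auto

lemma asubst_cong: "(\<And>x. x \<in> avars a \<Longrightarrow> \<sigma> x = \<tau> x) \<Longrightarrow> asubst a \<sigma> = asubst a \<tau>"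
  by (cases a) (fastforce intro: tsubst_cong)

lemma gsubst_ren_fixing:
  assumes "\<And>x. x \<in> gvars G \<Longrightarrow> l x = x"
  shows "gsubst G (ren l) = G"
proof -
  have "asubst a (ren l) = a" if "(a, p) \<in> G" for a p
    using that assms asubst_cong[of a "ren l" Var] by (force simp: gvars_def ren_def)
  then show ?thesis
    unfolding gsubst_def by (force simp: image_iff)
qed

lemma tvars_ren: "tvars (tsubst t (ren l)) = l ` tvars t"
  by (induction t) (auto simp: ren_def)

lemma avars_ren: "avars (asubst a (ren l)) = l ` avars a"
  by (cases a) (auto simp: tvars_ren)

lemma gvars_ren: "gvars (gsubst G (ren l)) = l ` gvars G"
  unfolding gvars_def gsubst_def by (force simp: avars_ren)

lemma cvars_crename: "cvars (crename c l) = l ` cvars c"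
  by (simp add: crename_def cvars_def avars_ren gvars_ren image_Un)

lemma crename_comp: "crename c (l \<circ> \<xi>) =
    Clause (asubst (chead (crename c \<xi>)) (ren l)) (gsubst (cbody (crename c \<xi>)) (ren l))"
  by (simp add: crename_def asubst_scomp gsubst_scomp scomp_ren_ren)

lemma finite_tvars: "finite (tvars t)"
  by (induction t) auto

lemma finite_avars: "finite (avars a)"
  by (cases a) (auto simp: finite_tvars)

lemma finite_gvars: "finite G \<Longrightarrow> finite (gvars G)"
  unfolding gvars_def by (auto simp: finite_avars)

lemma prios_gsubst [simp]: "prios (gsubst G \<sigma>) = prios G"
  unfolding prios_def gsubst_def by (force simp: image_image case_prod_beta)

lemma gsubst_Un: "gsubst (A \<union> B) \<sigma> = gsubst A \<sigma> \<union> gsubst B \<sigma>"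
  unfolding gsubst_def by auto

lemma gsubst_insert: "gsubst (insert (a, p) G) \<sigma> = insert (asubst a \<sigma>, p) (gsubst G \<sigma>)"
  unfolding gsubst_def by auto

lemma gshift_id [simp]: "gshift G id = G"
  unfolding gshift_def by (simp add: case_prod_beta)

lemma gshift_gsubst: "gshift (gsubst G \<sigma>) \<pi> = gsubst (gshift G \<pi>) \<sigma>"
  unfolding gshift_def gsubst_def by (simp add: image_image case_prod_beta)

lemma is_pgoal_gsubst: "is_pgoal G \<Longrightarrow> is_pgoal (gsubst G \<sigma>)"
  unfolding is_pgoal_def gsubst_def inj_on_def by fastforce

lemma split_least_gsubst:
  "split_least G a p F \<Longrightarrow> split_least (gsubst G \<sigma>) (asubst a \<sigma>) p (gsubst F \<sigma>)"
  unfolding split_least_def by (simp add: gsubst_insert)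

lemma shifting_id: "shifting id"
  by (simp add: shifting_def strict_mono_def)

lemma p_variant_ren: "bij l \<Longrightarrow> p_variant (gsubst G (ren l)) G"
  unfolding p_variant_def using shifting_id by (intro exI[of _ l] exI[of _ id]) simp

definition conj_subst :: "('v \<Rightarrow> 'v) \<Rightarrow> ('f, 'v) subst \<Rightarrow> ('f, 'v) subst" where
  "conj_subst l \<theta> = scomp (ren (inv l)) (scomp \<theta> (ren l))"

lemma scomp_ren_conj_subst: "bij l \<Longrightarrow> scomp (ren l) (conj_subst l \<theta>) = scomp \<theta> (ren l)"
  unfolding conj_subst_def by simp

lemma conj_subst_apply: "bij l \<Longrightarrow> conj_subst l \<theta> (l x) = tsubst (\<theta> x) (ren l)"
  by (simp add: conj_subst_def scomp_def ren_def bij_is_inj)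

lemma conj_subst_inv: "bij l \<Longrightarrow> conj_subst (inv l) (conj_subst l \<theta>) = \<theta>"
  by (simp add: conj_subst_def inv_inv_eq scomp_assoc)

lemma sdom_conj_subst: "bij l \<Longrightarrow> sdom (conj_subst l \<theta>) = l ` sdom \<theta>"
proof -
  assume l: "bij l"
  have "conj_subst l \<theta> x = Var x \<longleftrightarrow> \<theta> (inv l x) = Var (inv l x)" for x
  proof -
    have "conj_subst l \<theta> x = tsubst (\<theta> (inv l x)) (ren l)"
      using conj_subst_apply[OF l] l by (metis bij_inv_eq_iff)
    moreover have "Var x = tsubst (Var (inv l x)) (ren l)"
      using l by (simp add: ren_def bij_is_surj surj_f_inv_f)
    ultimately show ?thesis
      using tsubst_ren_inj[OF l] by metis
  qed
  then show ?thesis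
    unfolding sdom_def by (simp add: bij_image_Collect_eq[OF l])
qed

lemma svars_conj_subst: "bij l \<Longrightarrow> svars (conj_subst l \<theta>) = l ` svars \<theta>"
  by (simp add: svars_def sdom_conj_subst conj_subst_apply tvars_ren image_Un image_UN)

lemma idem_relevant_mgu_ren:
  assumes l: "bij l" and mgu: "idem_relevant_mgu \<theta> a b"
  shows "idem_relevant_mgu (conj_subst l \<theta>) (asubst a (ren l)) (asubst b (ren l))"
  unfolding idem_relevant_mgu_def is_mgu_def
proof (intro conjI allI impI)
  have "asubst (asubst a \<theta>) (ren l) = asubst (asubst b \<theta>) (ren l)"
    using mgu by (simp add: idem_relevant_mgu_def is_mgu_def unifier_def)
  then show "unifier (conj_subst l \<theta>) (asubst a (ren l)) (asubst b (ren l))"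
    by (simp add: unifier_def asubst_scomp scomp_ren_conj_subst[OF l])
  show "\<exists>\<gamma>. \<delta> = scomp (conj_subst l \<theta>) \<gamma>"
    if "unifier \<delta> (asubst a (ren l)) (asubst b (ren l))" for \<delta>
  proof -
    have "unifier (scomp (ren l) \<delta>) a b"
      using that by (simp add: unifier_def asubst_scomp)
    then obtain \<gamma> where \<gamma>: "scomp (ren l) \<delta> = scomp \<theta> \<gamma>"
      using mgu unfolding idem_relevant_mgu_def is_mgu_def by blast
    have "\<delta> = scomp (ren (inv l)) (scomp (ren l) \<delta>)"
      using l by simp
    also have "\<dots> = scomp (conj_subst l \<theta>) (scomp (ren (inv l)) \<gamma>)"
      using l unfolding \<gamma> conj_subst_def by (simp add: scomp_assoc)
    finally show ?thesis by blast
  qed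
  have "scomp \<theta> (scomp \<theta> \<sigma>) = scomp \<theta> \<sigma>" for \<sigma>
    using mgu by (simp add: idem_relevant_mgu_def scomp_assoc[symmetric])
  then show "scomp (conj_subst l \<theta>) (conj_subst l \<theta>) = conj_subst l \<theta>"
    using l by (simp add: conj_subst_def scomp_assoc)
  show "svars (conj_subst l \<theta>) \<subseteq> avars (asubst a (ren l)) \<union> avars (asubst b (ren l))"
    using mgu l by (auto simp: idem_relevant_mgu_def svars_conj_subst avars_ren)
qed

definition rename_step :: "('v \<Rightarrow> 'v) \<Rightarrow> ('f, 'v) step \<Rightarrow> ('f, 'v) step" where
  "rename_step l s = Step (gsubst (ssrc s) (ren l)) (scl s) (l \<circ> sren s) (conj_subst l (smgu s))
     (sshift s) (gsubst (stgt s) (ren l))"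

lemma rename_step_sel [simp]:
  "ssrc (rename_step l s) = gsubst (ssrc s) (ren l)"
  "scl (rename_step l s) = scl s"
  "sren (rename_step l s) = l \<circ> sren s"
  "smgu (rename_step l s) = conj_subst l (smgu s)"
  "sshift (rename_step l s) = sshift s"
  "stgt (rename_step l s) = gsubst (stgt s) (ren l)"
  by (simp_all add: rename_step_def)

lemma rename_step_inv: "bij l \<Longrightarrow> rename_step (inv l) (rename_step l s) = s"
  by (simp add: rename_step_def conj_subst_inv comp_assoc[symmetric] bij_is_inj)

lemma cvars_rclause_rename_step: "cvars (rclause (rename_step l s)) = l ` cvars (rclause s)"
  unfolding rclause_def by (simp add: cvars_crename image_comp)

lemma valid_rename_step:
  assumes l: "bij l" and s: "valid_step s"
  shows "valid_step (rename_step l s)"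
proof -
  let ?C = "crename (scl s) (sren s)"
  obtain a p F where split: "split_least (ssrc s) a p F"
    and mgu: "idem_relevant_mgu (smgu s) a (chead ?C)"
    and prios: "prios F \<inter> prios (gshift (cbody ?C) (sshift s)) = {}"
    and tgt: "stgt s = gsubst (F \<union> gshift (cbody ?C) (sshift s)) (smgu s)"
    using s unfolding valid_step_def by blast
  have head: "chead (crename (scl s) (l \<circ> sren s)) = asubst (chead ?C) (ren l)"
    and body: "cbody (crename (scl s) (l \<circ> sren s)) = gsubst (cbody ?C) (ren l)"
    by (simp_all add: crename_comp)
  have "gvars (ssrc s) \<inter> cvars ?C = {}"
    using s unfolding valid_step_def by blast
  moreover have "cvars (crename (scl s) (l \<circ> sren s)) = l ` cvars ?C"
    by (simp add: cvars_crename image_comp)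
  ultimately have apart: "gvars (gsubst (ssrc s) (ren l)) \<inter> cvars (crename (scl s) (l \<circ> sren s)) = {}"
    using l by (simp add: gvars_ren image_Int[symmetric] bij_is_inj)
  have "gsubst (stgt s) (ren l) =
      gsubst (gsubst F (ren l) \<union> gshift (gsubst (cbody ?C) (ren l)) (sshift s)) (conj_subst l (smgu s))"
    unfolding tgt using l
    by (simp add: gshift_gsubst gsubst_Un[symmetric] gsubst_scomp scomp_ren_conj_subst)
  moreover have "prios (gsubst F (ren l)) \<inter> prios (gshift (gsubst (cbody ?C) (ren l)) (sshift s)) = {}"
    using prios by (simp add: gshift_gsubst)
  moreover have "bij (l \<circ> sren s)"
    using l s by (simp add: valid_step_def bij_comp)
  ultimately show ?thesis
    using s apart split_least_gsubst[OF split] idem_relevant_mgu_ren[OF l mgu]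
    unfolding valid_step_def rename_step_sel head body by (blast intro: is_pgoal_gsubst)
qed

lemma congruent_lowering_rename_step:
  assumes l: "bij l" and s: "valid_step s"
  shows "is_congruent_lowering (rename_step l s) s"
proof -
  obtain a p K where split: "split_least (ssrc s) a p K"
    using s unfolding valid_step_def by blast
  have "lowering_with (rename_step l s) s {} l id a p K"
    unfolding lowering_with_def
    using s valid_rename_step[OF l s] l shifting_id split split_least_gsubst[OF split]
    by (simp add: is_pgoal_def prios_def)
  then show ?thesis
    unfolding is_congruent_lowering_def using shifting_id by fastforce
qed

lemma scheduling_rule_rename_step:
  assumes S: "scheduling_rule S" and l: "bij l" and s: "s \<in> S"
  shows "rename_step l s \<in> S"
proof -
  have valid: "valid_step s"
    using S s unfolding scheduling_rule_def by blast
  have "is_congruent_lowering s (rename_step l s)"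
    using congruent_lowering_rename_step[OF bij_imp_bij_inv[OF l] valid_rename_step[OF l valid]]
    by (simp add: rename_step_inv[OF l])
  then have "mutual_congruent_lowerings (rename_step l s) s"
    using congruent_lowering_rename_step[OF l valid] unfolding mutual_congruent_lowerings_def by blast
  then show ?thesis
    using S s valid_rename_step[OF l valid] unfolding scheduling_rule_def complete_def by blast
qed

definition rclause_vars :: "('f, 'v) step list \<Rightarrow> 'v set" where
  "rclause_vars ds = (\<Union>s\<in>set ds. cvars (rclause s))"

lemma rclause_vars_rename_steps:
  "rclause_vars (map (rename_step l) ds) = l ` rclause_vars ds"
  by (simp add: rclause_vars_def cvars_rclause_rename_step image_UN)

lemma chain_append: "chain G ds M \<Longrightarrow> chain M es R \<Longrightarrow> chain G (ds @ es) R"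
  by (induction ds arbitrary: G) auto

lemma chain_rename_steps:
  "bij l \<Longrightarrow> chain G ds R \<Longrightarrow> chain (gsubst G (ren l)) (map (rename_step l) ds) (gsubst R (ren l))"
  by (induction ds arbitrary: G) (auto simp: valid_rename_step)

lemma chain_source_pgoal: "chain G ds R \<Longrightarrow> ds \<noteq> [] \<Longrightarrow> is_pgoal G"
  by (cases ds) (auto simp: valid_step_def)

lemma finite_rclause_vars: "chain G ds R \<Longrightarrow> finite (rclause_vars ds)"
proof (induction ds arbitrary: G)
  case (Cons s ds)
  then have "finite (cbody (scl s))"
    by (simp add: valid_step_def is_pgoal_def)
  then have "finite (cvars (scl s))"
    by (simp add: cvars_def finite_gvars finite_avars)
  then have "finite (cvars (rclause s))"
    by (simp add: rclause_def cvars_crename)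
  with Cons show ?case
    by (auto simp: rclause_vars_def)
qed (simp add: rclause_vars_def)

lemma pSLD_rclause_vars_disjoint: "pSLD G ds R \<Longrightarrow> rclause_vars ds \<inter> gvars G = {}"
  unfolding pSLD_def rclause_vars_def by (fastforce simp: in_set_conv_nth)

lemma pSLD_rename_steps:
  assumes l: "bij l" and fixed: "\<And>x. x \<in> gvars G \<Longrightarrow> l x = x" and d: "pSLD G ds R"
  shows "pSLD G (map (rename_step l) ds) (gsubst R (ren l))"
  unfolding pSLD_def
proof (intro conjI allI impI)
  have "gsubst G (ren l) = G"
    using fixed by (rule gsubst_ren_fixing)
  then show "chain G (map (rename_step l) ds) (gsubst R (ren l))"
    using chain_rename_steps[OF l, of G ds R] d by (simp add: pSLD_def)
  have disjoint_image: "l ` A \<inter> l ` B = {}" if "A \<inter> B = {}" for A B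
    using that l by (simp add: image_Int[symmetric] bij_is_inj)
  have "l ` gvars G = gvars G"
    using fixed by simp
  fix j
  assume "j < length (map (rename_step l) ds)"
  then have j: "j < length ds"
    by simp
  have "cvars (rclause (ds ! j)) \<inter> gvars G = {}"
    using d j by (simp add: pSLD_def)
  then have "l ` cvars (rclause (ds ! j)) \<inter> l ` gvars G = {}"
    by (rule disjoint_image)
  then show "cvars (rclause (map (rename_step l) ds ! j)) \<inter> gvars G = {}"
    using j \<open>l ` gvars G = gvars G\<close> by (simp add: cvars_rclause_rename_step)
  fix i
  assume "i < j"
  with d j have "cvars (rclause (ds ! j)) \<inter> cvars (rclause (ds ! i)) = {}"
    by (simp add: pSLD_def)
  then show "cvars (rclause (map (rename_step l) ds ! j)) \<inter>
      cvars (rclause (map (rename_step l) ds ! i)) = {}"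
    using j \<open>i < j\<close> disjoint_image by (simp add: cvars_rclause_rename_step)
qed

lemma pSLD_append:
  assumes ds: "pSLD G ds M" and es: "pSLD M es R"
    and apart: "rclause_vars es \<inter> (gvars G \<union> rclause_vars ds) = {}"
  shows "pSLD G (ds @ es) R"
  unfolding pSLD_def
proof (intro conjI allI impI)
  have "chain G ds M" "chain M es R"
    using ds es by (simp_all add: pSLD_def)
  then show "chain G (ds @ es) R"
    by (rule chain_append)
  fix j
  assume j: "j < length (ds @ es)"
  have j_apart: "cvars (rclause ((ds @ es) ! j)) \<inter> gvars G = {} \<and>
      (\<forall>i<j. cvars (rclause ((ds @ es) ! j)) \<inter> cvars (rclause ((ds @ es) ! i)) = {})"
  proof (cases "j < length ds")
    case True
    then have "(ds @ es) ! i = ds ! i" if "i \<le> j" for i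
      using that by (simp add: nth_append)
    with ds True show ?thesis
      by (simp add: pSLD_def)
  next
    case False
    define k where "k = j - length ds"
    have k: "k < length es" "(ds @ es) ! j = es ! k"
      using j False by (auto simp: k_def nth_append)
    have es_k: "cvars (rclause (es ! k)) \<subseteq> rclause_vars es"
      using nth_mem[OF k(1)] by (auto simp: rclause_vars_def)
    have "cvars (rclause (es ! k)) \<inter> cvars (rclause ((ds @ es) ! i)) = {}" if "i < j" for i
    proof (cases "i < length ds")
      case True
      then have "cvars (rclause ((ds @ es) ! i)) \<subseteq> rclause_vars ds"
        by (auto simp: rclause_vars_def nth_append intro!: bexI[of _ "ds ! i"])
      with es_k apart show ?thesis
        by blast
    next
      case False
      then have "(ds @ es) ! i = es ! (i - length ds)" "i - length ds < k"
        using \<open>i < j\<close> by (auto simp: nth_append k_def)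
      with es k(1) show ?thesis
        by (simp add: pSLD_def)
    qed
    moreover have "cvars (rclause (es ! k)) \<inter> gvars G = {}"
      using es_k apart by blast
    ultimately show ?thesis
      unfolding k(2) by blast
  qed
  then show "cvars (rclause ((ds @ es) ! j)) \<inter> gvars G = {}"
    by blast
  fix i
  assume "i < j"
  with j_apart show "cvars (rclause ((ds @ es) ! j)) \<inter> cvars (rclause ((ds @ es) ! i)) = {}"
    by blast
qed

lemma deriv_via_rename_steps:
  assumes S: "scheduling_rule S" and l: "bij l" and fixed: "\<And>x. x \<in> gvars G \<Longrightarrow> l x = x"
    and d: "deriv_via S G ds M R"
  shows "deriv_via S G (map (rename_step l) ds) M (gsubst R (ren l))"
proof -
  have "pSLD G (map (rename_step l) ds) (gsubst R (ren l))"
    using d pSLD_rename_steps[where G = G, OF l fixed] by (simp add: deriv_via_def)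
  moreover have "set (map (rename_step l) ds) \<subseteq> S"
    using d scheduling_rule_rename_step[OF S l] by (auto simp: deriv_via_def)
  ultimately show ?thesis
    using d by (simp add: deriv_via_def template_def comp_def)
qed

lemma deriv_via_append:
  assumes "deriv_via S G ds M F" "deriv_via S F es N R"
    and "rclause_vars es \<inter> (gvars G \<union> rclause_vars ds) = {}"
  shows "deriv_via S G (ds @ es) (M @ N) R"
  using assms pSLD_append by (auto simp: deriv_via_def template_def)

lemma obtain_renaming_apart:
  assumes "infinite (UNIV :: 'a set)" and U: "finite U" and W: "finite W"
  obtains l :: "'a \<Rightarrow> 'a" where "bij l" "l ` U \<inter> W = {}" "\<And>x. x \<in> W - U \<Longrightarrow> l x = x"
proof -
  have "infinite (UNIV - (U \<union> W))"
    using assms by (simp add: Diff_infinite_finite)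
  then obtain U' where U': "finite U'" "card U' = card U" "U' \<subseteq> UNIV - (U \<union> W)"
    using infinite_arbitrarily_large by blast
  then obtain f where f: "bij_betw f U U'"
    using finite_same_card_bij[OF U] by metis
  define l where "l x = (if x \<in> U then f x else if x \<in> U' then inv_into U f x else x)" for x
  have "l (l x) = x" for x
  proof -
    consider "x \<in> U" | "x \<in> U'" | "x \<notin> U" "x \<notin> U'"
      by blast
    then show ?thesis
    proof cases
      case 1
      then have "f x \<in> U'" "f x \<notin> U"
        using bij_betw_apply[OF f] U'(3) by auto
      then show ?thesis
        using 1 f by (simp add: l_def bij_betw_inv_into_left)
    next
      case 2
      then have "x \<notin> U" "inv_into U f x \<in> U"
        using f U'(3) by (auto intro: bij_betw_apply[OF bij_betw_inv_into])
      then show ?thesis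
        using 2 f by (simp add: l_def bij_betw_inv_into_right)
    next
      case 3
      then show ?thesis
        by (simp add: l_def)
    qed
  qed
  then have "bij l"
    by (rule involuntory_imp_bij)
  moreover have "l ` U \<inter> W = {}"
    using bij_betw_apply[OF f] U'(3) by (auto simp: l_def)
  moreover have "l x = x" if "x \<in> W - U" for x
    using that U'(3) by (auto simp: l_def)
  ultimately show ?thesis
    using that by blast
qed

lemma obtain_renaming_apart_pSLD:
  assumes "infinite (UNIV :: 'v set)" and d1: "pSLD G d1 F" and d2: "pSLD F d2 Q"
  obtains l :: "'v \<Rightarrow> 'v" where "bij l" "\<And>x. x \<in> gvars F \<Longrightarrow> l x = x"
    "l ` rclause_vars d2 \<inter> (gvars G \<union> rclause_vars d1) = {}"
proof (cases "d2 = []")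
  case True
  (* nothing to rename; G need not even be finite here *)
  then show ?thesis
    using that[of id] by (simp add: rclause_vars_def)
next
  case False
  have "chain G d1 F" "chain F d2 Q"
    using d1 d2 by (simp_all add: pSLD_def)
  then have "chain G (d1 @ d2) Q"
    by (rule chain_append)
  then have "is_pgoal G"
    by (rule chain_source_pgoal) (simp add: False)
  have "is_pgoal F"
    using \<open>chain F d2 Q\<close> False by (rule chain_source_pgoal)
  with \<open>is_pgoal G\<close> have fin_W: "finite (gvars G \<union> rclause_vars d1 \<union> gvars F)"
    using finite_rclause_vars[OF \<open>chain G d1 F\<close>] by (simp add: is_pgoal_def finite_gvars)
  have fin_U: "finite (rclause_vars d2)"
    using \<open>chain F d2 Q\<close> by (rule finite_rclause_vars)
  obtain l where l: "bij l"
    and moved: "l ` rclause_vars d2 \<inter> (gvars G \<union> rclause_vars d1 \<union> gvars F) = {}"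
    and fixed: "\<And>x. x \<in> (gvars G \<union> rclause_vars d1 \<union> gvars F) - rclause_vars d2 \<Longrightarrow> l x = x"
    using obtain_renaming_apart[OF assms(1) fin_U fin_W] by blast
  show ?thesis
  proof (rule that[OF l])
    show "l x = x" if "x \<in> gvars F" for x
      using that fixed pSLD_rclause_vars_disjoint[OF d2] by blast
    show "l ` rclause_vars d2 \<inter> (gvars G \<union> rclause_vars d1) = {}"
      using moved by blast
  qed
qed

theorem mainTheorem9:
  fixes S :: "('f, 'v) step set"
  assumes "infinite (UNIV :: 'v set)"
    and "scheduling_rule S"
    and "deriv_via S G d1 E F"
    and "deriv_via S F d2 H Q"
  shows "\<exists>d3 R. deriv_via S G (d1 @ d3) (E @ H) R \<and> deriv_via S F d3 H R \<and> p_variant R Q"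
proof -
  have "pSLD G d1 F" "pSLD F d2 Q"
    using assms(3,4) by (simp_all add: deriv_via_def)
  then obtain l where l: "bij l" and fixes_F: "\<And>x. x \<in> gvars F \<Longrightarrow> l x = x"
    and apart: "l ` rclause_vars d2 \<inter> (gvars G \<union> rclause_vars d1) = {}"
    using obtain_renaming_apart_pSLD[OF assms(1)] by blast
  define d3 where "d3 = map (rename_step l) d2"
  have "deriv_via S F d3 H (gsubst Q (ren l))"
    unfolding d3_def using deriv_via_rename_steps[OF assms(2) l fixes_F assms(4)] .
  moreover have "deriv_via S G (d1 @ d3) (E @ H) (gsubst Q (ren l))"
    using deriv_via_append[OF assms(3) calculation] apart
    by (simp add: d3_def rclause_vars_rename_steps)
  ultimately show ?thesis
    using p_variant_ren[OF l] by blast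
qed

end
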